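(* (1) $M=\bigoplus_{d\in \mathbb{N}} G_d$, where $G_d$ is the set of permutations of $\mathcal{X}_d$ which commute with $\mathrm{Gal}(\mathbb{F}_{q^d}:\mathbb{F}_q)$. (2) $G_d\cong \mathbb{Z}/d\mathbb{Z} \wr \mathrm{Perm}(r_d)$, where $r_d$ is the number of orbits of size $d$ (i.e. $r_d=d^{-1}\#\mathcal{X}_d$). (3) Equivalently, $G_d\cong (\mathbb{Z}/d\mathbb{Z})^{r_d}\rtimes_h \mathrm{Perm}(r_d)$, where $h:\mathrm{Perm}(r_d)\to \mathrm{Aut}((\mathbb{Z}/d\mathbb{Z})^{r_d})$ is given by $h(\sigma)(a_1,\dots,a_{r_d})=(a_{(1)^\sigma},\dots,a_{(r_d)^\sigma})$.
   Context: $M$ denotes the set of permutations of $\overline{\mathbb{F}}_q^n$ induced by profinite polynomial endomorphisms over $\mathbb{F}_q$; equivalently, $M$ is the set of permutations of $\overline{\mathbb{F}}_q^n$ commuting with the coordinatewise action of $\mathrm{Gal}(\overline{\mathbb{F}}_q:\mathbb{F}_q)$. $\mathcal{X}_d$ is the union of all orbits of size $d$ of $\mathrm{Gal}(\overline{\mathbb{F}}_q:\mathbb{F}_q)$ acting on $\overline{\mathbb{F}}_q^n$. Permutations act on the right: $(x)^{\sigma\rho}=((x)^\sigma)^\rho$. *)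

theory Defs
  imports "HOL-Algebra.Algebraic_Closure_Type" "HOL-Algebra.Product_Groups"
    "HOL-Algebra.Elementary_Groups" "HOL-Algebra.Bij"
begin

text \<open>Setting: F_q is a finite field type 'q (q = CARD('q)); its algebraic
closure is the library type 'q alg_closure, with F_q embedded via to_ac.
Points of the affine n-space are maps 'n => 'q alg_closure, 'n a finite
index type with n = CARD('n).\<close>

definition Gal :: "('q::{finite,field} alg_closure \<Rightarrow> 'q alg_closure) set" where
  "Gal = {\<sigma>. bij \<sigma> \<and> (\<forall>x y. \<sigma> (x + y) = \<sigma> x + \<sigma> y)
              \<and> (\<forall>x y. \<sigma> (x * y) = \<sigma> x * \<sigma> y)
              \<and> (\<forall>a. \<sigma> (to_ac a) = to_ac a)}"

definition gal_orbit :: "('n \<Rightarrow> 'q::{finite,field} alg_closure) \<Rightarrow> ('n \<Rightarrow> 'q alg_closure) set" where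
  "gal_orbit x = (\<lambda>\<sigma>. \<sigma> \<circ> x) ` Gal"

definition Xset :: "nat \<Rightarrow> ('n::finite \<Rightarrow> 'q::{finite,field} alg_closure) set" where
  "Xset d = {x. finite (gal_orbit x) \<and> card (gal_orbit x) = d}"

definition r_num :: "('n::finite \<Rightarrow> 'q::{finite,field} alg_closure) itself \<Rightarrow> nat \<Rightarrow> nat" where
  "r_num T d = card (Xset d :: ('n \<Rightarrow> 'q alg_closure) set) div d"

text \<open>Permutation group of a set S, permutations acting on the right:
  the product f g means first f, then g.\<close>
definition RPerm :: "'a set \<Rightarrow> ('a \<Rightarrow> 'a) monoid" where
  "RPerm S = \<lparr>carrier = Bij S, monoid.mult = (\<lambda>f g. compose S g f), one = (\<lambda>x\<in>S. x)\<rparr>"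

definition M_group :: "(('n::finite \<Rightarrow> 'q::{finite,field} alg_closure) \<Rightarrow> ('n \<Rightarrow> 'q alg_closure)) monoid" where
  "M_group = \<lparr>carrier = {\<pi>. bij \<pi> \<and> (\<forall>\<sigma>\<in>Gal. \<forall>x. \<pi> (\<sigma> \<circ> x) = \<sigma> \<circ> \<pi> x)},
              monoid.mult = (\<lambda>f g. g \<circ> f), one = id\<rparr>"

definition G_group :: "nat \<Rightarrow> (('n::finite \<Rightarrow> 'q::{finite,field} alg_closure) \<Rightarrow> ('n \<Rightarrow> 'q alg_closure)) monoid" where
  "G_group d = (RPerm (Xset d))\<lparr>carrier :=
      {\<pi> \<in> Bij (Xset d). \<forall>\<sigma>\<in>Gal. \<forall>x\<in>Xset d. \<pi> (\<sigma> \<circ> x) = \<sigma> \<circ> \<pi> x}\<rparr>"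

definition semidirect_product ::
  "('a, 'x) monoid_scheme \<Rightarrow> ('b, 'y) monoid_scheme \<Rightarrow> ('b \<Rightarrow> 'a \<Rightarrow> 'a) \<Rightarrow> ('a \<times> 'b) monoid" where
  "semidirect_product N H \<phi> =
     \<lparr>carrier = carrier N \<times> carrier H,
      monoid.mult = (\<lambda>p q. (fst p \<otimes>\<^bsub>N\<^esub> \<phi> (snd p) (fst q), snd p \<otimes>\<^bsub>H\<^esub> snd q)),
      one = (\<one>\<^bsub>N\<^esub>, \<one>\<^bsub>H\<^esub>)\<rparr>"

definition cyc_power :: "nat \<Rightarrow> nat \<Rightarrow> (nat \<Rightarrow> int) monoid" where
  "cyc_power d r = product_group {1..r} (\<lambda>_. integer_mod_group d)"

definition coord_perm_action :: "nat \<Rightarrow> nat \<Rightarrow> (nat \<Rightarrow> nat) \<Rightarrow> (nat \<Rightarrow> int) \<Rightarrow> (nat \<Rightarrow> int)" where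
  "coord_perm_action d r \<sigma> = (\<lambda>a\<in>carrier (cyc_power d r). \<lambda>i\<in>{1..r}. a (\<sigma> i))"

definition wreath_cyc :: "nat \<Rightarrow> nat \<Rightarrow> ((nat \<Rightarrow> int) \<times> (nat \<Rightarrow> nat)) monoid" where
  "wreath_cyc d r = semidirect_product (cyc_power d r) (RPerm {1..r}) (coord_perm_action d r)"

end

theory Submission
  imports Defs "HOL-Library.Cardinality"
begin

text \<open>
  Every automorphism of the algebraic closure over F_q agrees, on each finite subfield
  F_(q^m), with a power of the Frobenius y \<mapsto> y^q. Hence the Galois orbit of a point x is
  its Frobenius orbit, whose size is the least m with x^(q^m) = x coordinatewise.
  A Galois-equivariant permutation preserves orbit sizes, so M is the product of its
  restrictions to the sets X_d, and G_d is the centraliser of the Frobenius acting on X_d,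
  a permutation with r_d cycles of length d. Fixing a base point on each cycle, an element
  of this centraliser is determined by the cycle \<tau>(i) to which it sends the i-th base point
  and the shift a_i mod d along that cycle; this is the isomorphism with
  the semidirect product of (Z/dZ)^(r_d) and Perm(r_d).
\<close>

section \<open>Finite fields and polynomials\<close>

lemma prime_CHAR_finite_field: "prime CHAR('a::{finite,field})"
  by (simp add: finite_imp_CHAR_pos prime_CHAR_semidom)

lemma CHAR_finite_field_gt_1: "CHAR('a::{finite,field}) > 1"
  using prime_gt_1_nat[OF prime_CHAR_finite_field] .

lemma of_nat_mod_CHAR: "(of_nat (n mod CHAR('a)) :: 'a::semiring_1) = of_nat n"
proof -
  have "(of_nat n :: 'a) = of_nat (n div CHAR('a) * CHAR('a) + n mod CHAR('a))" by simp
  thus ?thesis by (simp only: of_nat_add of_nat_mult of_nat_CHAR) simp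
qed

lemma of_nat_mult_mem:
  fixes S :: "'a::comm_ring_1 set"
  assumes "0 \<in> S" "\<And>x y. x \<in> S \<Longrightarrow> y \<in> S \<Longrightarrow> x + y \<in> S" "v \<in> S"
  shows "of_nat n * v \<in> S"
  by (induction n) (auto simp: algebra_simps assms)

lemma power_card_finite_field: "(a::'a::{finite,field}) ^ CARD('a) = a"
proof (cases "a = 0")
  case False
  have "a * (\<Prod>y\<in>UNIV-{0}. a * y) = a * a ^ (CARD('a) - 1) * \<Prod>(UNIV-{0})"
    by (simp add: prod.distrib mult_ac)
  also have "a * a ^ (CARD('a) - 1) = a ^ CARD('a)"
    using finite_UNIV_card_ge_0[where ?'a = 'a] by (simp flip: power_Suc)
  also have "(\<Prod>y\<in>UNIV-{0}. a * y) = (\<Prod>y\<in>UNIV-{0}. y)"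
    by (rule prod.reindex_bij_witness[of _ "\<lambda>y. y / a" "\<lambda>y. a * y"]) (use False in auto)
  finally show ?thesis
    by simp
qed (use finite_UNIV_card_ge_0[where ?'a = 'a] in auto)

lemma power_card_minus_2_mult:
  assumes "(a::'a::{finite,field}) \<noteq> 0"
  shows "a ^ (CARD('a) - 2) * a = 1"
proof -
  have "card {0, 1::'a} \<le> CARD('a)"
    by (rule card_mono) auto
  hence "CARD('a) = Suc (Suc (CARD('a) - 2))"
    by simp
  hence "a * (a ^ (CARD('a) - 2) * a) = a * 1"
    by (metis power_card_finite_field power_Suc power_Suc2 mult.assoc mult_1_right)
  thus ?thesis
    using assms by (metis mult_left_cancel)
qed

text \<open>Equal sums s + c v = s' + c' v with c \<noteq> c' would put (c - c') v into S; but c - c' is a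
  nonzero element of the prime field, whose inverse (c - c')^(q-2) again lies in the prime field.\<close>
lemma inj_on_additive_extension:
  fixes S :: "'a::{finite,field} set"
  assumes S0: "0 \<in> S" and Sadd: "\<And>x y. x \<in> S \<Longrightarrow> y \<in> S \<Longrightarrow> x + y \<in> S" and v: "v \<notin> S"
  shows "inj_on (\<lambda>(s, c). s + of_nat c * v) (S \<times> {..<CHAR('a)})"
proof (rule inj_onI, clarsimp)
  let ?p = "CHAR('a)"
  have nat_mult: "of_nat n * s \<in> S" if "s \<in> S" for n s
    using of_nat_mult_mem[OF S0 Sadd that] .
  have neg: "- s \<in> S" if "s \<in> S" for s
  proof -
    have "of_nat (?p - 1) * s + s = of_nat ?p * s"
      using CHAR_finite_field_gt_1[where 'a='a] by (simp add: distrib_right of_nat_diff)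
    hence "of_nat (?p - 1) * s = - s"
      by (simp add: eq_neg_iff_add_eq_0)
    thus ?thesis
      using nat_mult[OF that] by metis
  qed
  fix s c s' c' assume s: "s \<in> S" "s' \<in> S" and c: "c < ?p" "c' < ?p"
    and e: "s + of_nat c * v = s' + of_nat c' * v"
  show "s = s' \<and> c = c'"
  proof (cases "c = c'")
    case True
    thus ?thesis using e by simp
  next
    case False
    define n where "n = c + ?p - c'"
    have n: "(of_nat n :: 'a) = of_nat c - of_nat c'"
      using c unfolding n_def by (simp add: of_nat_diff)
    have "\<not> ?p dvd n"
    proof
      assume "?p dvd n"
      then obtain k where k: "n = ?p * k" by blast
      have "0 < n" "n < ?p * 2" "n \<noteq> ?p"
        using c False unfolding n_def by auto
      hence "k \<noteq> 0" "k < 2" "k \<noteq> 1"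
        unfolding k by auto
      thus False by simp
    qed
    hence "(of_nat n :: 'a) \<noteq> 0"
      by (simp add: of_nat_eq_0_iff_char_dvd)
    hence inv: "of_nat (n ^ (CARD('a) - 2)) * of_nat n = (1 :: 'a)"
      using power_card_minus_2_mult by simp
    have "of_nat n * v = s' - s"
      using e unfolding n by (simp add: algebra_simps)
    hence "v = of_nat (n ^ (CARD('a) - 2)) * (s' - s)"
      using inv by (metis mult.assoc mult_1)
    moreover have "s' - s \<in> S"
      using Sadd[OF s(2) neg[OF s(1)]] by simp
    ultimately show ?thesis
      using v nat_mult by metis
  qed
qed

lemma card_additive_extension:
  fixes S :: "'a::{finite,field} set"
  assumes S0: "0 \<in> S" and Sadd: "\<And>x y. x \<in> S \<Longrightarrow> y \<in> S \<Longrightarrow> x + y \<in> S" and v: "v \<notin> S"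
  defines "S' \<equiv> (\<lambda>(s, c). s + of_nat c * v) ` (S \<times> {..<CHAR('a)})"
  shows "card S' = card S * CHAR('a)" "0 \<in> S'" "\<And>x y. x \<in> S' \<Longrightarrow> y \<in> S' \<Longrightarrow> x + y \<in> S'"
    "S \<subset> S'"
proof -
  let ?p = "CHAR('a)"
  have p1: "?p > 1"
    by (rule CHAR_finite_field_gt_1)
  show "card S' = card S * ?p"
    unfolding S'_def using card_image[OF inj_on_additive_extension[OF S0 Sadd v]]
    by (simp add: card_cartesian_product)
  show "0 \<in> S'"
    unfolding S'_def using S0 p1 by (force intro!: image_eqI[of _ _ "(0, 0)"])
  show "S \<subset> S'"
  proof
    show "S \<subseteq> S'"
      unfolding S'_def using p1 by (force intro: image_eqI[of _ _ "(_, 0)"])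
    have "v \<in> S'"
      unfolding S'_def using p1 S0 by (force intro!: image_eqI[of _ _ "(0, 1)"])
    thus "S \<noteq> S'" using v by blast
  qed
  fix x y assume "x \<in> S'" "y \<in> S'"
  then obtain s1 c1 s2 c2 where a: "s1 \<in> S" "s2 \<in> S" "x = s1 + of_nat c1 * v" "y = s2 + of_nat c2 * v"
    unfolding S'_def by auto
  have "x + y = (s1 + s2) + of_nat ((c1 + c2) mod ?p) * v"
    using a by (simp add: algebra_simps of_nat_mod_CHAR)
  thus "x + y \<in> S'"
    unfolding S'_def using a p1 Sadd by (force intro!: image_eqI[of _ _ "(s1 + s2, (c1 + c2) mod ?p)"])
qed

lemma card_additive_subgroup_prime_power:
  fixes S :: "'a::{finite,field} set"
  assumes "0 \<in> S" "\<And>x y. x \<in> S \<Longrightarrow> y \<in> S \<Longrightarrow> x + y \<in> S" "card S = CHAR('a) ^ f"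
  shows "\<exists>e. CARD('a) = CHAR('a) ^ e"
  using assms
proof (induction "card (UNIV - S)" arbitrary: S f rule: less_induct)
  case less
  show ?case
  proof (cases "S = UNIV")
    case True
    thus ?thesis using less by metis
  next
    case False
    then obtain v where v: "v \<notin> S" by blast
    define S' where "S' \<equiv> (\<lambda>(s, c). s + of_nat c * v) ` (S \<times> {..<CHAR('a)})"
    note S' = card_additive_extension[OF less(2,3) v, folded S'_def]
    have "card (UNIV - S') < card (UNIV - S)"
      using S'(4) by (intro psubset_card_mono) auto
    thus ?thesis
      using less(1)[OF _ S'(2,3), of "Suc f"] S'(1) less(4) by (simp add: mult.commute)
  qed
qed

lemma card_finite_field_prime_power: "\<exists>e. CARD('a::{finite,field}) = CHAR('a) ^ e"
  by (rule card_additive_subgroup_prime_power[of "{0}" 0]) auto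

lemma ring_of_type_algebra_simps [simp]:
  "carrier (ring_of_type_algebra :: 'a::ring_1 ring) = UNIV"
  "monoid.mult (ring_of_type_algebra :: 'a ring) = (*)"
  "one (ring_of_type_algebra :: 'a ring) = 1"
  "zero (ring_of_type_algebra :: 'a ring) = 0"
  "add (ring_of_type_algebra :: 'a ring) = (+)"
  by (simp_all add: ring_of_type_algebra_def)

lemma finite_subfield_cyclic:
  fixes K :: "'a::field set"
  assumes "finite K" "0 \<in> K" "1 \<in> K"
    and "\<And>x y. x \<in> K \<Longrightarrow> y \<in> K \<Longrightarrow> x + y \<in> K" "\<And>x. x \<in> K \<Longrightarrow> - x \<in> K"
    and "\<And>x y. x \<in> K \<Longrightarrow> y \<in> K \<Longrightarrow> x * y \<in> K" "\<And>x. x \<in> K \<Longrightarrow> inverse x \<in> K"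
  obtains g where "g \<in> K" "\<And>y. y \<in> K \<Longrightarrow> y \<noteq> 0 \<Longrightarrow> \<exists>i. y = g ^ i"
proof -
  let ?R = "ring_of_type_algebra :: 'a ring"
  interpret F: field ?R
    by (rule field_from_type_algebra)
  have minus: "\<ominus>\<^bsub>?R\<^esub> x = - x" for x
    by (rule F.minus_equality) simp_all
  have inv: "inv\<^bsub>?R\<^esub> x = inverse x" if "x \<noteq> 0" for x
    using that by (intro F.comm_inv_char) simp_all
  have "subring K ?R"
    by (rule F.subringI) (simp_all add: assms minus)
  hence "subfield K ?R"
    by (rule F.subfieldI') (simp add: assms inv)
  hence "field (?R\<lparr>carrier := K\<rparr>)"
    by (rule F.subfield_iff(2))
  moreover have "finite (carrier (?R\<lparr>carrier := K\<rparr>))"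
    using assms(1) by simp
  ultimately obtain a where gen:
    "a \<in> carrier (Multiplicative_Group.mult_of (?R\<lparr>carrier := K\<rparr>))"
    "carrier (Multiplicative_Group.mult_of (?R\<lparr>carrier := K\<rparr>)) = {a [^]\<^bsub>?R\<lparr>carrier := K\<rparr>\<^esub> i | i::nat. i \<in> UNIV}"
    using field.finite_field_mult_group_has_gen by blast
  have pow: "x [^]\<^bsub>?R\<lparr>carrier := K\<rparr>\<^esub> n = x ^ n" for x and n :: nat
    by (induction n) (simp_all add: mult.commute)
  have "a \<in> K"
    using gen(1) by simp
  moreover have "K - {0} = {a ^ i | i. True}"
    using gen(2) by (simp add: pow)
  ultimately show ?thesis
    by (intro that[of a]) auto
qed

lemma poly_hom_fixed_coeffs:
  fixes h :: "'a::comm_ring_1 \<Rightarrow> 'a"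
  assumes add: "\<And>x y. h (x + y) = h x + h y" and mult: "\<And>x y. h (x * y) = h x * h y"
    and fixed: "\<And>i. h (coeff p i) = coeff p i"
  shows "h (poly p x) = poly p (h x)"
  using fixed
proof (induction p)
  case 0
  show ?case using add[of 0 0] by simp
next
  case (pCons a p)
  have "h a = a" "\<And>i. h (coeff p i) = coeff p i"
    using pCons.prems[of 0] pCons.prems[of "Suc _"] by simp_all
  thus ?case using pCons.IH by (simp add: add mult)
qed

lemma map_poly_prod_hom:
  fixes h :: "'a::comm_ring_1 \<Rightarrow> 'b::comm_ring_1"
  assumes add: "\<And>x y. h (x + y) = h x + h y" and mult: "\<And>x y. h (x * y) = h x * h y"
    and one: "h 1 = 1"
  shows "map_poly h (\<Prod>i\<in>A. p i) = (\<Prod>i\<in>A. map_poly h (p i))"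
proof -
  have zero: "h 0 = 0" using add[of 0 0] by simp
  have map_poly_mult: "map_poly h (f * g) = map_poly h f * map_poly h g" for f g
    by (rule poly_eqI) (simp add: coeff_map_poly zero coeff_mult mult
        flip: sum_comp_morphism[of h, OF zero add, unfolded comp_def])
  show ?thesis
    by (induction A rule: infinite_finite_induct) (simp_all add: one map_poly_mult)
qed

section \<open>The Frobenius of the algebraic closure\<close>

definition frob :: "nat \<Rightarrow> 'q::{finite,field} alg_closure \<Rightarrow> 'q alg_closure" where
  "frob k y = y ^ (CARD('q) ^ k)"

lemma frob_add: "frob k (x + y) = frob k x + frob k (y :: 'q::{finite,field} alg_closure)"
proof -
  obtain e where "CARD('q) = CHAR('q) ^ e"
    using card_finite_field_prime_power by blast
  hence "CARD('q) ^ k = CHAR('q alg_closure) ^ (e * k)"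
    by (simp add: power_mult)
  thus ?thesis
    unfolding frob_def using prime_CHAR_finite_field[where 'a='q]
    by (intro freshmans_dream') simp_all
qed

lemma frob_mult: "frob k (x * y) = frob k x * frob k (y :: 'q::{finite,field} alg_closure)"
  unfolding frob_def by (simp add: power_mult_distrib)

lemma frob_0 [simp]: "frob k 0 = (0 :: 'q::{finite,field} alg_closure)"
  unfolding frob_def by simp

lemma frob_1 [simp]: "frob k 1 = (1 :: 'q::{finite,field} alg_closure)"
  unfolding frob_def by simp

lemma frob_to_ac [simp]: "frob k (to_ac a) = to_ac a"
proof (induction k)
  case (Suc k)
  thus ?case
    by (simp add: frob_def power_mult flip: to_ac_power) (simp add: power_card_finite_field)
qed (simp add: frob_def)

lemma frob_0_left [simp]: "frob 0 y = y"
  unfolding frob_def by simp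

lemma frob_frob: "frob a (frob b y) = frob (a + b) (y :: 'q::{finite,field} alg_closure)"
  unfolding frob_def by (simp add: power_add mult.commute flip: power_mult)

lemma frob_commute: "frob a (frob b y) = frob b (frob a (y :: 'q::{finite,field} alg_closure))"
  by (simp add: frob_frob add.commute)

lemma frob_power: "frob k (y ^ n) = frob k (y :: 'q::{finite,field} alg_closure) ^ n"
  unfolding frob_def by (simp add: mult.commute flip: power_mult)

lemma frob_uminus: "frob k (- y) = - frob k (y :: 'q::{finite,field} alg_closure)"
proof -
  have "frob k (- y) + frob k y = 0"
    by (simp flip: frob_add)
  thus ?thesis
    by (simp add: eq_neg_iff_add_eq_0)
qed

lemma frob_inverse: "frob k (inverse y) = inverse (frob k (y :: 'q::{finite,field} alg_closure))"
  unfolding frob_def by (simp add: power_inverse)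

lemma inj_frob: "inj (frob k :: 'q::{finite,field} alg_closure \<Rightarrow> _)"
proof (rule injI)
  fix x y :: "'q alg_closure" assume "frob k x = frob k y"
  moreover have "frob k (x - y) + frob k y = frob k x"
    by (simp flip: frob_add)
  ultimately have "frob k (x - y) = 0"
    by simp
  thus "x = y"
    unfolding frob_def by simp
qed

lemma frob_fixed_mult:
  assumes "frob m y = (y :: 'q::{finite,field} alg_closure)"
  shows "frob (m * j) y = y"
proof (induction j)
  case (Suc j)
  have "frob (m * Suc j) y = frob m (frob (m * j) y)"
    by (simp add: frob_frob)
  thus ?case using Suc assms by simp
qed simp

lemma frob_periodic: "\<exists>m>0. frob m (y :: 'q::{finite,field} alg_closure) = y"
proof -
  obtain P :: "'q poly" where P: "P \<noteq> 0" "poly (map_poly to_ac P) y = 0"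
    using alg_closure_algebraic by blast
  define Q where "Q = map_poly to_ac P"
  have "Q \<noteq> 0"
    unfolding Q_def using P(1) by (simp add: map_poly_eq_0_iff)
  moreover have "range (\<lambda>k. frob k y) \<subseteq> {x. poly Q x = 0}"
  proof clarify
    fix k
    have "frob k (poly Q y) = poly Q (frob k y)"
      by (rule poly_hom_fixed_coeffs) (simp_all add: frob_add frob_mult Q_def coeff_map_poly)
    thus "poly Q (frob k y) = 0"
      using P(2) Q_def by simp
  qed
  ultimately have "finite (range (\<lambda>k. frob k y))"
    using poly_roots_finite finite_subset by metis
  hence "\<not> inj (\<lambda>k. frob k y)"
    using finite_imageD infinite_UNIV_nat by blast
  then obtain a b where "a \<noteq> b" "frob a y = frob b y"
    unfolding inj_def by blast
  then obtain a b where ab: "a < b" "frob a y = frob b y"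
    by (metis linorder_neqE_nat)
  hence "frob a (frob (b - a) y) = frob a y"
    by (simp add: frob_frob)
  hence "frob (b - a) y = y"
    by (rule injD[OF inj_frob])
  thus ?thesis
    using ab(1) by (intro exI[of _ "b - a"]) simp
qed

lemma surj_frob: "surj (frob k :: 'q::{finite,field} alg_closure \<Rightarrow> _)"
proof -
  have "y \<in> range (frob k)" for y :: "'q alg_closure"
  proof -
    obtain m where m: "m > 0" "frob m y = y" using frob_periodic by blast
    have "frob k (frob (m * k - k) y) = frob (m * k) y"
      using m(1) by (simp add: frob_frob)
    also have "\<dots> = y"
      by (rule frob_fixed_mult[OF m(2)])
    finally show ?thesis
      by (rule range_eqI[OF sym])
  qed
  thus ?thesis by blast
qed

lemma frob_in_Gal: "frob k \<in> Gal"
  unfolding Gal_def using inj_frob surj_frob frob_add frob_mult frob_to_ac by (blast intro: bijI)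

lemma GalD:
  assumes "\<sigma> \<in> Gal"
  shows "\<sigma> (x + y) = \<sigma> x + \<sigma> y" "\<sigma> (x * y) = \<sigma> x * \<sigma> y" "\<sigma> (to_ac a) = to_ac a"
    "\<sigma> 0 = 0" "\<sigma> (x ^ n) = \<sigma> x ^ n"
proof -
  show add: "\<sigma> (x + y) = \<sigma> x + \<sigma> y" and mult: "\<And>x y. \<sigma> (x * y) = \<sigma> x * \<sigma> y"
    and base: "\<And>a. \<sigma> (to_ac a) = to_ac a"
    using assms unfolding Gal_def by blast+
  show "\<sigma> 0 = 0" using base[of 0] by simp
  show "\<sigma> (x ^ n) = \<sigma> x ^ n"
    using base[of 1] by (induction n) (simp_all add: mult)
qed

lemma frob_fixed_points_roots:
  assumes "m > 0"
  obtains Q :: "'q::{finite,field} alg_closure poly"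
  where "Q \<noteq> 0" "degree Q = CARD('q) ^ m" "{y. frob m y = y} = {y. poly Q y = 0}"
proof
  define N where "N = CARD('q) ^ m"
  have "card {0, 1::'q} \<le> CARD('q)"
    by (rule card_mono) auto
  hence q2: "2 \<le> CARD('q)"
    by simp
  have "CARD('q) ^ 1 \<le> N"
    unfolding N_def using assms q2 by (intro power_increasing) auto
  hence N2: "N \<ge> 2"
    using q2 by simp
  let ?Q = "monom 1 N + [:0, -1:] :: 'q alg_closure poly"
  show "degree ?Q = CARD('q) ^ m"
    unfolding N_def[symmetric] using N2 by (subst degree_add_eq_left) (auto simp: degree_monom_eq)
  thus "?Q \<noteq> 0"
    using N2 unfolding N_def by auto
  show "{y. frob m y = y} = {y. poly ?Q y = 0}"
    by (auto simp: frob_def N_def poly_monom)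
qed

lemma finite_frob_fixed_points:
  assumes "m > 0"
  shows "finite {y. frob m y = (y :: 'q::{finite,field} alg_closure)}"
proof -
  obtain Q :: "'q alg_closure poly" where "Q \<noteq> 0" "{y. frob m y = y} = {y. poly Q y = 0}"
    using frob_fixed_points_roots[OF assms] by blast
  thus ?thesis
    using poly_roots_finite by simp
qed

lemma frob_1_fixed_iff: "frob 1 y = y \<longleftrightarrow> (y :: 'q::{finite,field} alg_closure) \<in> range to_ac"
proof -
  obtain Q :: "'q alg_closure poly"
    where Q: "Q \<noteq> 0" "degree Q = CARD('q)" "{y. frob 1 y = y} = {y. poly Q y = 0}"
    using frob_fixed_points_roots[of 1] by auto
  have "card (range (to_ac :: 'q \<Rightarrow> 'q alg_closure)) = CARD('q)"
    using card_image[OF inj_to_ac] by simp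
  hence "card {y. frob 1 y = (y :: 'q alg_closure)} \<le> card (range (to_ac :: 'q \<Rightarrow> _))"
    using card_poly_roots_bound[OF Q(1)] Q(2,3) by simp
  moreover have "range to_ac \<subseteq> {y. frob 1 y = (y :: 'q alg_closure)}"
    by auto
  moreover have "finite {y. frob 1 y = (y :: 'q alg_closure)}"
    by (rule finite_frob_fixed_points) simp
  ultimately have "range to_ac = {y. frob 1 y = (y :: 'q alg_closure)}"
    by (intro card_seteq)
  thus ?thesis by blast
qed

lemma coeff_prod_frob_stable:
  fixes C :: "'q::{finite,field} alg_closure set"
  assumes "finite C" "frob 1 ` C = C"
  shows "coeff (\<Prod>c\<in>C. [:- c, 1:]) i \<in> range to_ac"
proof -
  let ?f = "\<Prod>c\<in>C. [:- c, 1:]"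
  have "map_poly (frob 1) ?f = (\<Prod>c\<in>C. [:- frob 1 c, 1:])"
    by (simp add: map_poly_prod_hom frob_add frob_mult map_poly_pCons frob_uminus)
  also have "\<dots> = (\<Prod>c\<in>frob 1 ` C. [:- c, 1:])"
    by (subst prod.reindex) (auto intro: inj_on_subset[OF inj_frob])
  finally have "map_poly (frob 1) ?f = ?f"
    unfolding assms(2) .
  moreover have "coeff (map_poly (frob 1) ?f) i = frob 1 (coeff ?f i)"
    by (simp add: coeff_map_poly)
  ultimately have "frob 1 (coeff ?f i) = coeff ?f i"
    by simp
  thus ?thesis
    by (simp only: frob_1_fixed_iff)
qed

text \<open>Every automorphism of the algebraic closure over F_q acts on the finite field of
  q^m elements as a power of Frobenius: it permutes the roots of the polynomial whose roots
  are the Frobenius conjugates of a generator g, hence sends g to one of them.\<close>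
lemma Gal_eq_frob_on_fixed_field:
  assumes \<sigma>: "\<sigma> \<in> Gal" and m: "m > 0"
  shows "\<exists>k. \<forall>y. frob m y = y \<longrightarrow> \<sigma> y = frob k (y :: 'q::{finite,field} alg_closure)"
proof -
  let ?K = "{y. frob m y = (y :: 'q alg_closure)}"
  obtain g where "g \<in> ?K" "\<And>y. y \<in> ?K \<Longrightarrow> y \<noteq> 0 \<Longrightarrow> \<exists>i. y = g ^ i"
    by (rule finite_subfield_cyclic[of ?K])
      (simp_all add: finite_frob_fixed_points[OF m] frob_add frob_uminus frob_mult frob_inverse)
  hence g: "frob m g = g" "\<And>y. frob m y = y \<Longrightarrow> y \<noteq> 0 \<Longrightarrow> \<exists>i. y = g ^ i"
    by simp_all
  define C where "C = range (\<lambda>i. frob i g)"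
  have gC: "g \<in> C"
    unfolding C_def by (rule range_eqI[of _ _ 0]) simp
  have "C \<subseteq> ?K"
    unfolding C_def using g(1) by (auto simp: frob_commute[of m])
  hence finC: "finite C"
    using finite_frob_fixed_points[OF m] by (rule finite_subset)
  have "frob 1 ` C = C"
  proof
    show "frob 1 ` C \<subseteq> C"
      unfolding C_def by (auto simp: frob_frob)
    have "frob i g = frob 1 (frob (m - 1 + i) g)" for i
    proof -
      have "frob 1 (frob (m - 1 + i) g) = frob i (frob m g)"
        using m by (simp add: frob_frob add.commute)
      thus ?thesis using g(1) by simp
    qed
    thus "C \<subseteq> frob 1 ` C"
      unfolding C_def by blast
  qed
  have coeffs: "\<sigma> (coeff (\<Prod>c\<in>C. [:- c, 1:]) i) = coeff (\<Prod>c\<in>C. [:- c, 1:]) i" for i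
  proof -
    obtain a where "coeff (\<Prod>c\<in>C. [:- c, 1:]) i = to_ac a"
      using coeff_prod_frob_stable[OF finC \<open>frob 1 ` C = C\<close>] by blast
    thus ?thesis by (simp add: GalD[OF \<sigma>])
  qed
  have "poly (\<Prod>c\<in>C. [:- c, 1:]) (\<sigma> g) = \<sigma> (poly (\<Prod>c\<in>C. [:- c, 1:]) g)"
    using coeffs by (intro poly_hom_fixed_coeffs[symmetric]) (simp_all add: GalD[OF \<sigma>])
  also have "poly (\<Prod>c\<in>C. [:- c, 1:]) g = 0"
    using finC gC by (force simp: poly_prod prod_zero_iff)
  finally have "\<sigma> g \<in> C"
    using finC by (auto simp: poly_prod prod_zero_iff GalD[OF \<sigma>])
  then obtain k where k: "\<sigma> g = frob k g"
    unfolding C_def by blast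
  have "\<sigma> y = frob k y" if y: "frob m y = y" for y
  proof (cases "y = 0")
    case False
    then obtain i where "y = g ^ i"
      using g(2)[OF y] by blast
    thus ?thesis using k by (simp add: GalD[OF \<sigma>] frob_power)
  qed (simp add: GalD[OF \<sigma>])
  thus ?thesis by blast
qed

section \<open>Galois orbits of points\<close>

definition period :: "('n::finite \<Rightarrow> 'q::{finite,field} alg_closure) \<Rightarrow> nat" where
  "period x = (LEAST m. 0 < m \<and> frob m \<circ> x = x)"

lemma frob_comp_frob_comp: "frob a \<circ> (frob b \<circ> x) = frob (a + b) \<circ> x"
  by (auto simp: frob_frob)

lemma frob_comp_periodic: "\<exists>m>0. frob m \<circ> x = (x :: 'n::finite \<Rightarrow> 'q::{finite,field} alg_closure)"
proof -
  have "\<forall>i. \<exists>m. 0 < m \<and> frob m (x i) = x i"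
    using frob_periodic by blast
  then obtain M where M: "\<And>i. M i > 0" "\<And>i. frob (M i) (x i) = x i"
    by metis
  define m where "m = (\<Prod>i\<in>UNIV. M i)"
  have "frob m (x i) = x i" for i
  proof -
    have "M i dvd m"
      unfolding m_def by (rule dvd_prodI) auto
    thus ?thesis
      using frob_fixed_mult[OF M(2)] by (auto elim: dvdE)
  qed
  moreover have "m > 0"
    unfolding m_def using M(1) by (simp add: prod_pos)
  ultimately show ?thesis
    by (auto simp: fun_eq_iff)
qed

lemma period_pos: "period x > 0" and frob_period: "frob (period x) \<circ> x = x"
  using LeastI_ex[OF frob_comp_periodic[of x]] unfolding period_def by auto

lemma frob_comp_mod_period: "frob k \<circ> x = frob (k mod period x) \<circ> x"
proof -
  have "frob k \<circ> x = frob (k mod period x) \<circ> (frob (period x * (k div period x)) \<circ> x)"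
    by (simp only: frob_comp_frob_comp mod_mult_div_eq)
  also have "frob (period x * (k div period x)) \<circ> x = x"
    using frob_fixed_mult frob_period[of x] by (auto simp: fun_eq_iff)
  finally show ?thesis .
qed

lemma frob_comp_eq_iff: "frob a \<circ> x = frob b \<circ> x \<longleftrightarrow> a mod period x = b mod period x"
proof
  assume "a mod period x = b mod period x"
  thus "frob a \<circ> x = frob b \<circ> x"
    by (metis frob_comp_mod_period)
next
  have less: "a = b" if ab: "a < period x" "b < period x" "frob a \<circ> x = frob b \<circ> x" for a b
  proof (rule ccontr)
    have *: False if "a < b" "b < period x" "frob a \<circ> x = frob b \<circ> x" for a b
    proof -
      have "frob a \<circ> (frob (b - a) \<circ> x) = frob a \<circ> x"
        using that by (simp add: frob_comp_frob_comp)
      hence "frob (b - a) \<circ> x = x"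
        using inj_frob[of a] by (auto simp: fun_eq_iff inj_def)
      moreover have "0 < b - a" "b - a < period x"
        using that by auto
      ultimately show False
        unfolding period_def using not_less_Least by blast
    qed
    assume "a \<noteq> b"
    thus False
      using * ab by (metis linorder_neqE_nat)
  qed
  assume "frob a \<circ> x = frob b \<circ> x"
  hence "frob (a mod period x) \<circ> x = frob (b mod period x) \<circ> x"
    by (metis frob_comp_mod_period)
  thus "a mod period x = b mod period x"
    using period_pos[of x] by (intro less) simp_all
qed

lemma Gal_comp_eq_frob_comp_on_fixed:
  assumes "\<sigma> \<in> Gal" "0 < m"
  shows "\<exists>k. \<forall>x :: 'n \<Rightarrow> 'q::{finite,field} alg_closure. frob m \<circ> x = x \<longrightarrow> \<sigma> \<circ> x = frob k \<circ> x"
proof -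
  obtain k where k: "\<And>y. frob m y = y \<Longrightarrow> \<sigma> y = frob k y"
    using Gal_eq_frob_on_fixed_field[OF assms] by blast
  have "\<sigma> \<circ> x = frob k \<circ> x" if "frob m \<circ> x = x" for x :: "'n \<Rightarrow> 'q alg_closure"
    using fun_cong[OF that] by (simp add: fun_eq_iff k)
  thus ?thesis by blast
qed

lemma Gal_comp_eq_frob_comp:
  assumes "\<sigma> \<in> Gal"
  shows "\<exists>k. \<sigma> \<circ> x = frob k \<circ> (x :: 'n::finite \<Rightarrow> 'q::{finite,field} alg_closure)"
  using Gal_comp_eq_frob_comp_on_fixed[OF assms period_pos] frob_period by blast

lemma gal_orbit_eq_range: "gal_orbit x = range (\<lambda>k. frob k \<circ> (x :: 'n::finite \<Rightarrow> 'q::{finite,field} alg_closure))"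
proof
  show "gal_orbit x \<subseteq> range (\<lambda>k. frob k \<circ> x)"
  proof
    fix y assume "y \<in> gal_orbit x"
    then obtain \<sigma> where "\<sigma> \<in> Gal" "y = \<sigma> \<circ> x"
      unfolding gal_orbit_def by blast
    then obtain k where "y = frob k \<circ> x"
      using Gal_comp_eq_frob_comp by blast
    thus "y \<in> range (\<lambda>k. frob k \<circ> x)" by blast
  qed
  show "range (\<lambda>k. frob k \<circ> x) \<subseteq> gal_orbit x"
    unfolding gal_orbit_def using frob_in_Gal by blast
qed

lemma gal_orbit_eq_image_period: "gal_orbit x = (\<lambda>k. frob k \<circ> x) ` {..<period x}"
proof -
  have "frob k \<circ> x \<in> (\<lambda>k. frob k \<circ> x) ` {..<period x}" for k
    using period_pos[of x] frob_comp_mod_period[of k x] by (intro image_eqI[of _ _ "k mod period x"]) simp_all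
  thus ?thesis
    unfolding gal_orbit_eq_range by blast
qed

lemma finite_gal_orbit: "finite (gal_orbit x)"
  and card_gal_orbit: "card (gal_orbit x) = period x"
proof -
  have "inj_on (\<lambda>k. frob k \<circ> x) {..<period x}"
    by (rule inj_onI) (simp add: frob_comp_eq_iff)
  thus "card (gal_orbit x) = period x"
    unfolding gal_orbit_eq_image_period by (simp add: card_image)
  show "finite (gal_orbit x)"
    unfolding gal_orbit_eq_image_period by simp
qed

lemma gal_orbit_self: "x \<in> gal_orbit (x :: 'n::finite \<Rightarrow> 'q::{finite,field} alg_closure)"
  unfolding gal_orbit_eq_range by (rule range_eqI[of _ _ 0]) (simp add: comp_def)

lemma frob_comp_mem_gal_orbit: "frob k \<circ> x \<in> gal_orbit (x :: 'n::finite \<Rightarrow> 'q::{finite,field} alg_closure)"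
  unfolding gal_orbit_eq_range by (rule rangeI)

lemma gal_orbit_subset:
  assumes "y \<in> gal_orbit (x :: 'n::finite \<Rightarrow> 'q::{finite,field} alg_closure)"
  shows "gal_orbit y \<subseteq> gal_orbit x"
proof -
  obtain k where "y = frob k \<circ> x"
    using assms unfolding gal_orbit_eq_range by blast
  thus ?thesis
    unfolding gal_orbit_eq_range by (auto simp: frob_comp_frob_comp)
qed

lemma gal_orbit_sym:
  assumes "y \<in> gal_orbit (x :: 'n::finite \<Rightarrow> 'q::{finite,field} alg_closure)"
  shows "x \<in> gal_orbit y"
proof -
  obtain k where k: "y = frob k \<circ> x"
    using assms unfolding gal_orbit_eq_range by blast
  have "frob (period x * k - k) \<circ> y = frob (period x * k) \<circ> x"
    using period_pos[of x] by (simp add: k frob_comp_frob_comp)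
  also have "\<dots> = frob 0 \<circ> x"
    by (subst frob_comp_eq_iff) simp
  also have "\<dots> = x"
    by (simp add: comp_def)
  finally show ?thesis
    unfolding gal_orbit_eq_range by (rule range_eqI[OF sym])
qed

lemma gal_orbit_eqI:
  assumes "y \<in> gal_orbit (x :: 'n::finite \<Rightarrow> 'q::{finite,field} alg_closure)"
  shows "gal_orbit y = gal_orbit x"
  using gal_orbit_subset[OF assms] gal_orbit_subset[OF gal_orbit_sym[OF assms]] by (rule subset_antisym)

lemma Xset_iff_period: "x \<in> Xset d \<longleftrightarrow> period x = d"
  unfolding Xset_def using finite_gal_orbit card_gal_orbit by auto

lemma period_frob_comp: "period (frob k \<circ> x) = period x"
proof -
  have "frob j \<circ> (frob k \<circ> x) = frob k \<circ> x \<longleftrightarrow> frob j \<circ> x = x" for j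
  proof -
    have "frob j \<circ> (frob k \<circ> x) = frob k \<circ> (frob j \<circ> x)"
      by (simp add: frob_comp_frob_comp add.commute)
    thus ?thesis
      using inj_frob[of k] by (auto simp: fun_eq_iff inj_def)
  qed
  thus ?thesis
    unfolding period_def by (simp only:)
qed

lemma period_Gal_comp: "\<sigma> \<in> Gal \<Longrightarrow> period (\<sigma> \<circ> x) = period x"
  using Gal_comp_eq_frob_comp period_frob_comp by metis

lemma finite_Xset: "finite (Xset d :: ('n::finite \<Rightarrow> 'q::{finite,field} alg_closure) set)"
proof (cases "d = 0")
  case True
  have "x \<notin> Xset 0" for x :: "'n \<Rightarrow> 'q alg_closure"
    using period_pos[of x] by (simp add: Xset_iff_period)
  hence "Xset 0 = ({} :: ('n \<Rightarrow> 'q alg_closure) set)"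
    by blast
  thus ?thesis
    using True by simp
next
  case False
  let ?K = "{y. frob d y = (y :: 'q alg_closure)}"
  have "x \<in> PiE UNIV (\<lambda>_. ?K)" if "x \<in> Xset d" for x :: "'n \<Rightarrow> 'q alg_closure"
  proof -
    have "frob d \<circ> x = x"
      using that frob_period[of x] by (simp add: Xset_iff_period)
    thus ?thesis
      by (simp add: PiE_iff fun_eq_iff)
  qed
  hence "Xset d \<subseteq> PiE (UNIV :: 'n set) (\<lambda>_. ?K)"
    by blast
  moreover have "finite (PiE (UNIV :: 'n set) (\<lambda>_. ?K))"
    using finite_frob_fixed_points[of d] False by (intro finite_PiE) auto
  ultimately show ?thesis
    by (rule finite_subset)
qed

section \<open>Coordinate permutations of (Z/dZ)^r\<close>

lemma RPerm_simps [simp]: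
  "carrier (RPerm S) = Bij S" "monoid.mult (RPerm S) = (\<lambda>f g. compose S g f)"
  by (simp_all add: RPerm_def)

lemma Bij_mem: "\<tau> \<in> Bij S \<Longrightarrow> x \<in> S \<Longrightarrow> \<tau> x \<in> S"
  by (auto simp: Bij_def bij_betw_def)

lemma Bij_inj_on: "\<tau> \<in> Bij S \<Longrightarrow> inj_on \<tau> S"
  by (simp add: Bij_def bij_betw_def)

lemma carrier_cyc_power: "carrier (cyc_power d r) = (\<Pi>\<^sub>E i\<in>{1..r}. carrier (integer_mod_group d))"
  by (simp add: cyc_power_def)

lemma mult_cyc_power: "a \<otimes>\<^bsub>cyc_power d r\<^esub> b = (\<lambda>i\<in>{1..r}. (a i + b i) mod int d)"
  by (simp add: cyc_power_def)

lemma coord_perm_action_apply: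
  "a \<in> carrier (cyc_power d r) \<Longrightarrow> coord_perm_action d r \<tau> a = (\<lambda>i\<in>{1..r}. a (\<tau> i))"
  by (simp add: coord_perm_action_def)

lemma coord_perm_action_mem:
  assumes "\<tau> \<in> Bij {1..r}" "a \<in> carrier (cyc_power d r)"
  shows "coord_perm_action d r \<tau> a \<in> carrier (cyc_power d r)"
  using assms Bij_mem[OF assms(1)] by (auto simp: coord_perm_action_apply carrier_cyc_power)

lemma coord_perm_action_compose:
  assumes "\<tau> \<in> Bij {1..r}" "\<upsilon> \<in> Bij {1..r}" "a \<in> carrier (cyc_power d r)"
  shows "coord_perm_action d r (compose {1..r} \<upsilon> \<tau>) a
           = coord_perm_action d r \<tau> (coord_perm_action d r \<upsilon> a)"
  using assms Bij_mem[OF assms(1)] coord_perm_action_mem[OF assms(2,3)]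
  by (auto simp: coord_perm_action_apply compose_def intro!: restrict_ext)

lemma coord_perm_action_id:
  "a \<in> carrier (cyc_power d r) \<Longrightarrow> coord_perm_action d r (\<lambda>i\<in>{1..r}. i) a = a"
  by (auto simp: coord_perm_action_apply carrier_cyc_power PiE_iff extensional_def)

lemma coord_perm_action_auto:
  assumes \<tau>: "\<tau> \<in> Bij {1..r}"
  shows "coord_perm_action d r \<tau> \<in> auto (cyc_power d r)"
proof -
  let ?C = "carrier (cyc_power d r)" and ?h = "coord_perm_action d r"
  define \<tau>' where "\<tau>' = restrict (inv_into {1..r} \<tau>) {1..r}"
  have \<tau>': "\<tau>' \<in> Bij {1..r}"
    unfolding \<tau>'_def by (rule restrict_inv_into_Bij[OF \<tau>])
  have inverse: "?h \<upsilon> (?h \<upsilon>' a) = a"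
    if "\<upsilon> \<in> Bij {1..r}" "\<upsilon>' \<in> Bij {1..r}" "compose {1..r} \<upsilon>' \<upsilon> = (\<lambda>i\<in>{1..r}. i)" "a \<in> ?C"
    for \<upsilon> \<upsilon>' a
    using that by (metis coord_perm_action_compose coord_perm_action_id)
  have "compose {1..r} \<tau>' \<tau> = (\<lambda>i\<in>{1..r}. i)"
    unfolding \<tau>'_def by (rule Bij_compose_restrict_eq[OF \<tau>])
  moreover have "compose {1..r} \<tau> \<tau>' = (\<lambda>i\<in>{1..r}. i)"
    using \<tau> Bij_inv_into_mem[OF \<tau>]
    by (auto simp: \<tau>'_def compose_def Bij_def bij_betw_def f_inv_into_f)
  ultimately have "bij_betw (?h \<tau>) ?C ?C"
    using \<tau> \<tau>' coord_perm_action_mem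
    by (intro bij_betw_byWitness[where f' = "?h \<tau>'"]) (auto intro: inverse)
  hence "?h \<tau> \<in> Bij ?C"
    by (simp add: Bij_def coord_perm_action_def)
  moreover have "?h \<tau> \<in> hom (cyc_power d r) (cyc_power d r)"
  proof (rule homI)
    fix a b assume ab: "a \<in> ?C" "b \<in> ?C"
    hence "a \<otimes>\<^bsub>cyc_power d r\<^esub> b \<in> ?C"
      by (intro monoid.m_closed group.is_monoid) (simp_all add: cyc_power_def)
    thus "?h \<tau> (a \<otimes>\<^bsub>cyc_power d r\<^esub> b) = ?h \<tau> a \<otimes>\<^bsub>cyc_power d r\<^esub> ?h \<tau> b"
      using ab Bij_mem[OF \<tau>] by (simp add: coord_perm_action_apply mult_cyc_power fun_eq_iff)
  qed (rule coord_perm_action_mem[OF \<tau>])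
  ultimately show ?thesis
    by (simp add: auto_def)
qed

lemma coord_perm_action_hom:
  "coord_perm_action d r \<in> hom (RPerm {1..r}) (AutoGroup (cyc_power d r))"
proof (rule homI)
  fix \<tau> assume "\<tau> \<in> carrier (RPerm {1..r})"
  thus "coord_perm_action d r \<tau> \<in> carrier (AutoGroup (cyc_power d r))"
    using coord_perm_action_auto by (simp add: AutoGroup_def)
next
  fix \<tau> \<upsilon> assume "\<tau> \<in> carrier (RPerm {1..r})" "\<upsilon> \<in> carrier (RPerm {1..r})"
  hence \<tau>\<upsilon>: "\<tau> \<in> Bij {1..r}" "\<upsilon> \<in> Bij {1..r}"
    by simp_all
  have "coord_perm_action d r (compose {1..r} \<upsilon> \<tau>) =
        compose (carrier (cyc_power d r)) (coord_perm_action d r \<tau>) (coord_perm_action d r \<upsilon>)"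
    using coord_perm_action_compose[OF \<tau>\<upsilon>]
    by (auto simp: fun_eq_iff compose_def coord_perm_action_def)
  moreover have "coord_perm_action d r \<tau> \<in> Bij (carrier (cyc_power d r))"
    "coord_perm_action d r \<upsilon> \<in> Bij (carrier (cyc_power d r))"
    using coord_perm_action_auto \<tau>\<upsilon> by (simp_all add: auto_def)
  ultimately show "coord_perm_action d r (\<tau> \<otimes>\<^bsub>RPerm {1..r}\<^esub> \<upsilon>) =
    coord_perm_action d r \<tau> \<otimes>\<^bsub>AutoGroup (cyc_power d r)\<^esub> coord_perm_action d r \<upsilon>"
    by (simp add: AutoGroup_def BijGroup_def)
qed

lemma iso_sym_mult_closed:
  assumes "h \<in> iso G H"
    and closed: "\<And>x y. x \<in> carrier G \<Longrightarrow> y \<in> carrier G \<Longrightarrow> x \<otimes>\<^bsub>G\<^esub> y \<in> carrier G"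
  shows "H \<cong> G"
proof -
  have h: "h \<in> hom G H" "bij_betw h (carrier G) (carrier H)"
    using assms by (auto simp: iso_def)
  hence hinv: "bij_betw (inv_into (carrier G) h) (carrier H) (carrier G)"
    by (simp add: bij_betw_inv_into)
  have "inv_into (carrier G) h \<in> hom H G"
  proof (rule homI)
    show inv_mem: "inv_into (carrier G) h x \<in> carrier G" if "x \<in> carrier H" for x
      using hinv that by (auto simp: bij_betw_def)
    show "inv_into (carrier G) h (x \<otimes>\<^bsub>H\<^esub> y) = inv_into (carrier G) h x \<otimes>\<^bsub>G\<^esub> inv_into (carrier G) h y"
      if "x \<in> carrier H" "y \<in> carrier H" for x y
    proof (rule inv_into_f_eq)
      show "inj_on h (carrier G)"
        using h(2) by (rule bij_betw_imp_inj_on)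
      show "inv_into (carrier G) h x \<otimes>\<^bsub>G\<^esub> inv_into (carrier G) h y \<in> carrier G"
        using that by (simp add: inv_mem closed)
      show "h (inv_into (carrier G) h x \<otimes>\<^bsub>G\<^esub> inv_into (carrier G) h y) = x \<otimes>\<^bsub>H\<^esub> y"
        using that h bij_betw_inv_into_right[of h] inv_mem by (simp add: hom_mult)
    qed
  qed
  thus ?thesis
    unfolding is_iso_def iso_def using hinv by blast
qed

section \<open>Centralisers of permutations with cycles of equal length\<close>

lemma mod_add_right_cancel_nat: "(a + c) mod d = (b + c) mod d \<Longrightarrow> a mod d = b mod (d::nat)"
  by (simp add: nat_mod_eq_iff)

lemma wreath_cyc_simps:
  "carrier (wreath_cyc d r) = carrier (cyc_power d r) \<times> Bij {1..r}"
  "p \<otimes>\<^bsub>wreath_cyc d r\<^esub> q = (fst p \<otimes>\<^bsub>cyc_power d r\<^esub> coord_perm_action d r (snd p) (fst q),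
                                compose {1..r} (snd q) (snd p))"
  by (simp_all add: wreath_cyc_def semidirect_product_def)

lemma wreath_cyc_mult_closed:
  assumes "p \<in> carrier (wreath_cyc d r)" "q \<in> carrier (wreath_cyc d r)"
  shows "p \<otimes>\<^bsub>wreath_cyc d r\<^esub> q \<in> carrier (wreath_cyc d r)"
proof -
  have "group (cyc_power d r)"
    by (simp add: cyc_power_def)
  thus ?thesis
    using assms coord_perm_action_mem compose_Bij
    by (auto simp: wreath_cyc_simps intro: group.is_monoid monoid.m_closed)
qed

definition centraliser :: "('a \<Rightarrow> 'a) \<Rightarrow> 'a set \<Rightarrow> ('a \<Rightarrow> 'a) monoid" where
  "centraliser f \<Omega> = (RPerm \<Omega>)\<lparr>carrier := {\<pi> \<in> Bij \<Omega>. \<forall>x\<in>\<Omega>. \<pi> (f x) = f (\<pi> x)}\<rparr>"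

lemma centraliser_funpow:
  assumes "\<pi> \<in> carrier (centraliser f \<Omega>)" "x \<in> \<Omega>" "\<And>y. y \<in> \<Omega> \<Longrightarrow> f y \<in> \<Omega>"
  shows "\<pi> ((f ^^ k) x) = (f ^^ k) (\<pi> x)"
proof (induction k)
  case (Suc k)
  have "(f ^^ k) x \<in> \<Omega>"
    using assms(2,3) by (induction k) simp_all
  thus ?case
    using Suc assms(1) by (simp add: centraliser_def)
qed simp

locale cyclic_orbits =
  fixes f :: "'a \<Rightarrow> 'a" and \<Omega> :: "'a set" and d r :: nat and rep :: "nat \<Rightarrow> 'a"
  assumes d_pos: "0 < d"
    and orbit_mem: "i \<in> {1..r} \<Longrightarrow> (f ^^ a) (rep i) \<in> \<Omega>"
    and orbit_eq_iff: "i \<in> {1..r} \<Longrightarrow> j \<in> {1..r} \<Longrightarrow>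
           (f ^^ a) (rep i) = (f ^^ b) (rep j) \<longleftrightarrow> i = j \<and> a mod d = b mod d"
    and orbits_cover: "x \<in> \<Omega> \<Longrightarrow> \<exists>i\<in>{1..r}. \<exists>a. x = (f ^^ a) (rep i)"
begin

abbreviation pt :: "nat \<Rightarrow> nat \<Rightarrow> 'a" where
  "pt i a \<equiv> (f ^^ a) (rep i)"

lemma funpow_pt: "(f ^^ k) (pt i a) = pt i (k + a)"
  by (simp add: funpow_add)

lemma pt_mod_eq: "i \<in> {1..r} \<Longrightarrow> a mod d = b mod d \<Longrightarrow> pt i a = pt i b"
  using orbit_eq_iff by blast

lemma finite_Omega: "finite \<Omega>"
proof -
  have "\<Omega> \<subseteq> (\<lambda>(i, a). pt i a) ` ({1..r} \<times> {..<d})"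
  proof
    fix x assume "x \<in> \<Omega>"
    then obtain i a where "i \<in> {1..r}" "x = pt i a"
      using orbits_cover by blast
    hence "x = pt i (a mod d)" "a mod d < d"
      using pt_mod_eq[of i a "a mod d"] d_pos by simp_all
    thus "x \<in> (\<lambda>(i, a). pt i a) ` ({1..r} \<times> {..<d})"
      using \<open>i \<in> {1..r}\<close> by (intro image_eqI[of _ _ "(i, a mod d)"]) simp_all
  qed
  thus ?thesis
    by (rule finite_subset) simp
qed

definition cycle_index :: "'a \<Rightarrow> nat" where
  "cycle_index x = (SOME i. i \<in> {1..r} \<and> (\<exists>a. x = pt i a))"

definition cycle_offset :: "'a \<Rightarrow> nat" where
  "cycle_offset x = (SOME a. x = pt (cycle_index x) a)"

lemma cycle_index_offset:
  assumes "x \<in> \<Omega>"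
  shows "cycle_index x \<in> {1..r}" "x = pt (cycle_index x) (cycle_offset x)"
proof -
  have "\<exists>i. i \<in> {1..r} \<and> (\<exists>a. x = pt i a)"
    using orbits_cover[OF assms] by blast
  hence "cycle_index x \<in> {1..r} \<and> (\<exists>a. x = pt (cycle_index x) a)"
    unfolding cycle_index_def by (rule someI_ex)
  thus "cycle_index x \<in> {1..r}" "x = pt (cycle_index x) (cycle_offset x)"
    unfolding cycle_offset_def by (auto intro: someI_ex)
qed

lemma cycle_index_offset_pt:
  assumes "i \<in> {1..r}"
  shows "cycle_index (pt i a) = i" "cycle_offset (pt i a) mod d = a mod d"
proof -
  have "pt i a = pt (cycle_index (pt i a)) (cycle_offset (pt i a))" "cycle_index (pt i a) \<in> {1..r}"
    using cycle_index_offset[OF orbit_mem[OF assms]] by simp_all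
  hence "i = cycle_index (pt i a) \<and> a mod d = cycle_offset (pt i a) mod d"
    using orbit_eq_iff[OF assms] by simp
  thus "cycle_index (pt i a) = i" "cycle_offset (pt i a) mod d = a mod d"
    by simp_all
qed

definition wreath_act :: "(nat \<Rightarrow> int) \<times> (nat \<Rightarrow> nat) \<Rightarrow> 'a \<Rightarrow> 'a" where
  "wreath_act p = (\<lambda>x\<in>\<Omega>. pt (snd p (cycle_index x)) (cycle_offset x + nat (fst p (cycle_index x))))"

lemma wreath_act_pt:
  assumes "i \<in> {1..r}" "snd p \<in> Bij {1..r}"
  shows "wreath_act p (pt i a) = pt (snd p i) (a + nat (fst p i))"
proof -
  have "wreath_act p (pt i a) = pt (snd p i) (cycle_offset (pt i a) + nat (fst p i))"
    unfolding wreath_act_def using assms(1) orbit_mem cycle_index_offset_pt by simp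
  also have "\<dots> = pt (snd p i) (a + nat (fst p i))"
    using cycle_index_offset_pt(2)[OF assms(1)] Bij_mem[OF assms(2,1)]
    by (intro pt_mod_eq mod_add_cong) simp_all
  finally show ?thesis .
qed

lemma f_mem:
  assumes "x \<in> \<Omega>"
  shows "f x \<in> \<Omega>"
proof -
  have "pt (cycle_index x) (Suc (cycle_offset x)) \<in> \<Omega>"
    using orbit_mem[OF cycle_index_offset(1)[OF assms]] .
  thus ?thesis
    using cycle_index_offset(2)[OF assms] by simp
qed

lemma wreath_act_mem:
  assumes p: "p \<in> carrier (wreath_cyc d r)"
  shows "wreath_act p \<in> carrier (centraliser f \<Omega>)"
proof -
  obtain n \<tau> where p': "p = (n, \<tau>)" "n \<in> carrier (cyc_power d r)" "\<tau> \<in> Bij {1..r}"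
    using p by (cases p) (simp add: wreath_cyc_simps)
  have act: "wreath_act p (pt i a) = pt (\<tau> i) (a + nat (n i))" if "i \<in> {1..r}" for i a
    using wreath_act_pt[OF that, of p] p' by simp
  have into: "wreath_act p ` \<Omega> \<subseteq> \<Omega>"
  proof
    fix y assume "y \<in> wreath_act p ` \<Omega>"
    then obtain x where "x \<in> \<Omega>" "y = wreath_act p x"
      by blast
    then obtain i a where "i \<in> {1..r}" "y = wreath_act p (pt i a)"
      using orbits_cover by blast
    thus "y \<in> \<Omega>"
      using act orbit_mem Bij_mem[OF p'(3)] by simp
  qed
  have inj: "inj_on (wreath_act p) \<Omega>"
  proof (rule inj_onI)
    fix x y assume "x \<in> \<Omega>" "y \<in> \<Omega>" and e: "wreath_act p x = wreath_act p y"
    obtain i a j b where ij: "i \<in> {1..r}" "j \<in> {1..r}" "x = pt i a" "y = pt j b"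
      using orbits_cover[OF \<open>x \<in> \<Omega>\<close>] orbits_cover[OF \<open>y \<in> \<Omega>\<close>] by blast
    have "pt (\<tau> i) (a + nat (n i)) = pt (\<tau> j) (b + nat (n j))"
      using e act ij by simp
    hence "\<tau> i = \<tau> j \<and> (a + nat (n i)) mod d = (b + nat (n j)) mod d"
      by (rule orbit_eq_iff[OF Bij_mem[OF p'(3) ij(1)] Bij_mem[OF p'(3) ij(2)], THEN iffD1])
    moreover from this have "i = j"
      using inj_onD[OF Bij_inj_on[OF p'(3)] _ ij(1,2)] by blast
    ultimately have "(a + nat (n i)) mod d = (b + nat (n i)) mod d"
      by simp
    hence "a mod d = b mod d"
      by (rule mod_add_right_cancel_nat)
    thus "x = y"
      using ij \<open>i = j\<close> pt_mod_eq[OF ij(1)] by metis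
  qed
  have "bij_betw (wreath_act p) \<Omega> \<Omega>"
    using endo_inj_surj[OF finite_Omega into inj] inj by (simp add: bij_betw_def)
  hence "wreath_act p \<in> Bij \<Omega>"
    by (simp add: Bij_def wreath_act_def)
  moreover have "wreath_act p (f x) = f (wreath_act p x)" if x: "x \<in> \<Omega>" for x
  proof -
    obtain i a where i: "i \<in> {1..r}" and "x = pt i a"
      using orbits_cover[OF x] by blast
    hence "wreath_act p (f x) = wreath_act p (pt i (Suc a))"
      by simp
    also have "\<dots> = pt (\<tau> i) (Suc a + nat (n i))"
      by (rule act[OF i])
    also have "\<dots> = f (wreath_act p x)"
      using act[OF i] \<open>x = pt i a\<close> by simp
    finally show ?thesis .
  qed
  ultimately show ?thesis
    by (simp add: centraliser_def)
qed

lemma cyc_power_nat_mod: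
  assumes "n \<in> carrier (cyc_power d r)" "i \<in> {1..r}"
  shows "0 \<le> n i" "nat (n i) < d"
  using assms d_pos by (auto simp: carrier_cyc_power carrier_integer_mod_group PiE_iff nat_less_iff)

lemma wreath_act_mult:
  assumes p: "p \<in> carrier (wreath_cyc d r)" and q: "q \<in> carrier (wreath_cyc d r)"
  shows "wreath_act (p \<otimes>\<^bsub>wreath_cyc d r\<^esub> q) = compose \<Omega> (wreath_act q) (wreath_act p)"
proof (rule ext)
  fix x
  obtain n1 \<tau>1 n2 \<tau>2 where pq: "p = (n1, \<tau>1)" "q = (n2, \<tau>2)"
    "n1 \<in> carrier (cyc_power d r)" "\<tau>1 \<in> Bij {1..r}" "n2 \<in> carrier (cyc_power d r)" "\<tau>2 \<in> Bij {1..r}"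
    using p q by (cases p, cases q) (simp add: wreath_cyc_simps)
  have pq_snd: "snd (p \<otimes>\<^bsub>wreath_cyc d r\<^esub> q) \<in> Bij {1..r}"
    using wreath_cyc_mult_closed[OF p q] by (simp add: wreath_cyc_simps)
  show "wreath_act (p \<otimes>\<^bsub>wreath_cyc d r\<^esub> q) x = compose \<Omega> (wreath_act q) (wreath_act p) x"
  proof (cases "x \<in> \<Omega>")
    case False
    thus ?thesis by (simp add: wreath_act_def compose_def)
  next
    case True
    then obtain i a where i: "i \<in> {1..r}" and x: "x = pt i a"
      using orbits_cover by blast
    have j: "\<tau>1 i \<in> {1..r}"
      using Bij_mem[OF pq(4) i] .
    have "nat ((n1 i + n2 (\<tau>1 i)) mod int d) = (nat (n1 i) + nat (n2 (\<tau>1 i))) mod d"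
      using cyc_power_nat_mod(1)[OF pq(3) i] cyc_power_nat_mod(1)[OF pq(5) j]
      by (simp add: nat_mod_distrib nat_add_distrib)
    hence "(a + nat (fst (p \<otimes>\<^bsub>wreath_cyc d r\<^esub> q) i)) mod d = (a + nat (n1 i) + nat (n2 (\<tau>1 i))) mod d"
      using i pq(5) by (simp add: pq wreath_cyc_simps mult_cyc_power coord_perm_action_apply
          mod_add_right_eq add.assoc)
    moreover have "wreath_act (p \<otimes>\<^bsub>wreath_cyc d r\<^esub> q) x
        = pt (\<tau>2 (\<tau>1 i)) (a + nat (fst (p \<otimes>\<^bsub>wreath_cyc d r\<^esub> q) i))"
      using wreath_act_pt[OF i pq_snd] i by (simp add: x pq(1,2) wreath_cyc_simps compose_def)
    ultimately have "wreath_act (p \<otimes>\<^bsub>wreath_cyc d r\<^esub> q) x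
        = pt (\<tau>2 (\<tau>1 i)) (a + nat (n1 i) + nat (n2 (\<tau>1 i)))"
      using pt_mod_eq[OF Bij_mem[OF pq(6) j]] by metis
    also have "\<dots> = wreath_act q (wreath_act p x)"
      using wreath_act_pt[OF i, of p] wreath_act_pt[OF j, of q] pq by (simp add: x)
    finally show ?thesis
      using True by (simp add: compose_def)
  qed
qed

lemma inj_on_wreath_act: "inj_on wreath_act (carrier (wreath_cyc d r))"
proof (rule inj_onI)
  fix p q assume p: "p \<in> carrier (wreath_cyc d r)" and q: "q \<in> carrier (wreath_cyc d r)"
    and e: "wreath_act p = wreath_act q"
  obtain n1 \<tau>1 n2 \<tau>2 where pq: "p = (n1, \<tau>1)" "q = (n2, \<tau>2)"
    "n1 \<in> carrier (cyc_power d r)" "\<tau>1 \<in> Bij {1..r}" "n2 \<in> carrier (cyc_power d r)" "\<tau>2 \<in> Bij {1..r}"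
    using p q by (cases p, cases q) (simp add: wreath_cyc_simps)
  have "\<tau>1 i = \<tau>2 i \<and> n1 i = n2 i" if i: "i \<in> {1..r}" for i
  proof -
    have "pt (\<tau>1 i) (nat (n1 i)) = pt (\<tau>2 i) (nat (n2 i))"
      using e wreath_act_pt[OF i, of p 0] wreath_act_pt[OF i, of q 0] pq by simp
    hence "\<tau>1 i = \<tau>2 i \<and> nat (n1 i) mod d = nat (n2 i) mod d"
      by (rule orbit_eq_iff[OF Bij_mem[OF pq(4) i] Bij_mem[OF pq(6) i], THEN iffD1])
    thus ?thesis
      using cyc_power_nat_mod[OF pq(3) i] cyc_power_nat_mod[OF pq(5) i] by (simp add: eq_nat_nat_iff)
  qed
  moreover have "n1 \<in> extensional {1..r}" "n2 \<in> extensional {1..r}"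
    "\<tau>1 \<in> extensional {1..r}" "\<tau>2 \<in> extensional {1..r}"
    using pq by (simp_all add: carrier_cyc_power PiE_iff Bij_def)
  ultimately show "p = q"
    unfolding pq(1,2) by (metis extensionalityI)
qed

lemma centraliser_subset_image_wreath_act:
  "carrier (centraliser f \<Omega>) \<subseteq> wreath_act ` carrier (wreath_cyc d r)"
proof
  fix \<pi> assume \<pi>: "\<pi> \<in> carrier (centraliser f \<Omega>)"
  hence B: "\<pi> \<in> Bij \<Omega>"
    by (simp add: centraliser_def)
  define J where "J i = cycle_index (\<pi> (rep i))" for i
  define c where "c i = cycle_offset (\<pi> (rep i))" for i
  have rep_mem: "rep i \<in> \<Omega>" if "i \<in> {1..r}" for i
    using orbit_mem[OF that, of 0] by simp
  have Jc: "J i \<in> {1..r}" "\<pi> (rep i) = pt (J i) (c i)" if "i \<in> {1..r}" for i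
    unfolding J_def c_def using cycle_index_offset[OF Bij_mem[OF B rep_mem[OF that]]] by simp_all
  define \<tau> where "\<tau> = (\<lambda>i\<in>{1..r}. J i)"
  define n where "n = (\<lambda>i\<in>{1..r}. int (c i mod d))"
  have "inj_on \<tau> {1..r}"
  proof (rule inj_onI)
    fix i i' assume i: "i \<in> {1..r}" and i': "i' \<in> {1..r}" and "\<tau> i = \<tau> i'"
    hence JJ: "J i = J i'"
      by (simp add: \<tau>_def)
    define e where "e = c i + (d - 1) * c i'"
    have "e + c i' = c i + d * c i'"
      unfolding e_def using d_pos by (cases d) simp_all
    hence "(e + c i') mod d = c i mod d"
      by simp
    hence "pt (J i) (e + c i') = pt (J i) (c i)"
      by (rule pt_mod_eq[OF Jc(1)[OF i]])
    hence "\<pi> (pt i' e) = \<pi> (pt i 0)"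
      using centraliser_funpow[OF \<pi> rep_mem[OF i'] f_mem, of e] Jc[OF i'] Jc[OF i] JJ
      by (simp add: funpow_pt)
    hence "pt i' e = pt i 0"
      using inj_onD[OF Bij_inj_on[OF B] _ orbit_mem[OF i'] rep_mem[OF i]] by simp
    thus "i = i'"
      using orbit_eq_iff[OF i' i, of e 0] by simp
  qed
  moreover have "\<tau> ` {1..r} \<subseteq> {1..r}"
    using Jc by (auto simp: \<tau>_def)
  ultimately have "\<tau> \<in> Bij {1..r}"
    using endo_inj_surj[of "{1..r}" \<tau>] by (simp add: Bij_def bij_betw_def \<tau>_def)
  moreover have "n \<in> carrier (cyc_power d r)"
    using d_pos by (auto simp: n_def carrier_cyc_power carrier_integer_mod_group)
  ultimately have nW: "(n, \<tau>) \<in> carrier (wreath_cyc d r)"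
    by (simp add: wreath_cyc_simps)
  have "wreath_act (n, \<tau>) x = \<pi> x" for x
  proof (cases "x \<in> \<Omega>")
    case False
    thus ?thesis
      using B by (simp add: wreath_act_def Bij_def extensional_def)
  next
    case True
    then obtain i a where i: "i \<in> {1..r}" and x: "x = pt i a"
      using orbits_cover by blast
    have "wreath_act (n, \<tau>) x = pt (J i) (a + c i mod d)"
      using wreath_act_pt[OF i, of "(n, \<tau>)" a] \<open>\<tau> \<in> Bij {1..r}\<close> i by (simp add: x n_def \<tau>_def)
    also have "\<dots> = pt (J i) (a + c i)"
      by (rule pt_mod_eq[OF Jc(1)[OF i]]) (simp add: mod_add_right_eq)
    also have "\<dots> = \<pi> x"
      using centraliser_funpow[OF \<pi> rep_mem[OF i] f_mem, of a] Jc[OF i] by (simp add: x funpow_pt)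
    finally show ?thesis .
  qed
  thus "\<pi> \<in> wreath_act ` carrier (wreath_cyc d r)"
    using nW by (intro image_eqI[of _ _ "(n, \<tau>)"]) auto
qed

theorem centraliser_iso_wreath_cyc: "centraliser f \<Omega> \<cong> wreath_cyc d r"
proof (rule iso_sym_mult_closed)
  have "wreath_act \<in> hom (wreath_cyc d r) (centraliser f \<Omega>)"
    using wreath_act_mem wreath_act_mult by (intro homI) (simp_all add: centraliser_def)
  moreover have "wreath_act ` carrier (wreath_cyc d r) = carrier (centraliser f \<Omega>)"
    using wreath_act_mem centraliser_subset_image_wreath_act by blast
  ultimately show "wreath_act \<in> iso (wreath_cyc d r) (centraliser f \<Omega>)"
    using inj_on_wreath_act by (simp add: iso_def bij_betw_def)
qed (rule wreath_cyc_mult_closed)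

end

lemma period_M_group:
  assumes "\<pi> \<in> carrier (M_group :: (('n::finite \<Rightarrow> 'q::{finite,field} alg_closure) \<Rightarrow> _) monoid)"
  shows "period (\<pi> x) = period x"
proof -
  have inj: "inj \<pi>" and comm: "\<And>\<sigma> x. \<sigma> \<in> Gal \<Longrightarrow> \<pi> (\<sigma> \<circ> x) = \<sigma> \<circ> \<pi> x"
    using assms by (auto simp: M_group_def bij_is_inj)
  have "frob j \<circ> \<pi> x = \<pi> x \<longleftrightarrow> frob j \<circ> x = x" for j
    using comm[OF frob_in_Gal, of j x] injD[OF inj] by metis
  thus ?thesis
    unfolding period_def by (simp only:)
qed

lemma G_group_simps:
  "carrier (G_group d) = {\<pi> \<in> Bij (Xset d). \<forall>\<sigma>\<in>Gal. \<forall>x\<in>Xset d. \<pi> (\<sigma> \<circ> x) = \<sigma> \<circ> \<pi> x}"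
  "monoid.mult (G_group d) = (\<lambda>f g. compose (Xset d) g f)"
  by (simp_all add: G_group_def)

lemma restrict_M_group_mem_G_group:
  assumes \<pi>: "\<pi> \<in> carrier (M_group :: (('n::finite \<Rightarrow> 'q::{finite,field} alg_closure) \<Rightarrow> _) monoid)"
  shows "restrict \<pi> (Xset d) \<in> carrier (G_group d)"
proof -
  have bij: "bij \<pi>" and comm: "\<And>\<sigma> x. \<sigma> \<in> Gal \<Longrightarrow> \<pi> (\<sigma> \<circ> x) = \<sigma> \<circ> \<pi> x"
    using \<pi> by (auto simp: M_group_def)
  have "\<pi> ` Xset d = Xset d"
  proof
    show "\<pi> ` Xset d \<subseteq> Xset d"
      using period_M_group[OF \<pi>] by (auto simp: Xset_iff_period)
    show "Xset d \<subseteq> \<pi> ` Xset d"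
    proof
      fix y :: "'n \<Rightarrow> 'q alg_closure" assume y: "y \<in> Xset d"
      obtain x where "y = \<pi> x"
        using surjD[OF bij_is_surj[OF bij]] by blast
      moreover have "x \<in> Xset d"
        using y period_M_group[OF \<pi>, of x] by (simp add: Xset_iff_period \<open>y = \<pi> x\<close>)
      ultimately show "y \<in> \<pi> ` Xset d" by blast
    qed
  qed
  hence "bij_betw \<pi> (Xset d) (Xset d)"
    using inj_on_subset[OF bij_is_inj[OF bij]] by (simp add: bij_betw_def)
  hence "restrict \<pi> (Xset d) \<in> Bij (Xset d)"
    by (simp add: Bij_def bij_betw_restrict_eq)
  moreover have "\<sigma> \<circ> x \<in> Xset d" if "\<sigma> \<in> Gal" "x \<in> Xset d" for \<sigma> x
    using that by (simp add: Xset_iff_period period_Gal_comp)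
  ultimately show ?thesis
    by (auto simp: G_group_simps comm)
qed

lemma glue_mem_M_group:
  assumes F: "F \<in> carrier (product_group {1..} (G_group :: nat \<Rightarrow> (('n::finite \<Rightarrow> 'q::{finite,field} alg_closure) \<Rightarrow> _) monoid))"
  shows "(\<lambda>x. F (period x) x) \<in> carrier M_group"
proof -
  define \<pi> where "\<pi> x = F (period x) x" for x :: "'n \<Rightarrow> 'q alg_closure"
  have x_mem: "x \<in> Xset (period x)" for x :: "'n \<Rightarrow> 'q alg_closure"
    by (simp add: Xset_iff_period)
  have FG: "F (period x) \<in> carrier (G_group (period x))" for x :: "'n \<Rightarrow> 'q alg_closure"
    using F period_pos[of x] by (auto simp: PiE_iff)
  hence FB: "bij_betw (F (period x)) (Xset (period x)) (Xset (period x))" for x :: "'n \<Rightarrow> 'q alg_closure"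
    by (simp add: G_group_simps Bij_def)
  have period_\<pi>: "period (\<pi> x) = period x" for x
    using bspec[OF bij_betwE[OF FB] x_mem] by (simp add: \<pi>_def Xset_iff_period)
  have "inj \<pi>"
  proof (rule injI)
    fix x y assume e: "\<pi> x = \<pi> y"
    hence "period x = period y"
      using period_\<pi> by metis
    thus "x = y"
      using e x_mem[of x] x_mem[of y] bij_betw_imp_inj_on[OF FB[of x]] by (simp add: \<pi>_def inj_on_def)
  qed
  moreover have "surj \<pi>"
  proof -
    have "y \<in> range \<pi>" for y
    proof -
      have "y \<in> F (period y) ` Xset (period y)"
        unfolding bij_betw_imp_surj_on[OF FB[of y]] by (rule x_mem)
      then obtain x where x: "y = F (period y) x" "x \<in> Xset (period y)"
        by (rule imageE)
      have "period x = period y"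
        using x(2) by (simp only: Xset_iff_period)
      hence "\<pi> x = y"
        unfolding \<pi>_def using x(1) by (simp only:)
      thus ?thesis by blast
    qed
    thus ?thesis by blast
  qed
  moreover have "\<pi> (\<sigma> \<circ> x) = \<sigma> \<circ> \<pi> x" if "\<sigma> \<in> Gal" for \<sigma> x
    using FG[of x] that x_mem[of x] by (simp add: \<pi>_def G_group_simps period_Gal_comp)
  ultimately have "\<pi> \<in> carrier M_group"
    by (simp add: M_group_def bij_def)
  thus ?thesis
    by (simp add: \<pi>_def[abs_def])
qed

lemma restrict_glue:
  assumes F: "F \<in> carrier (product_group {1..} (G_group :: nat \<Rightarrow> (('n::finite \<Rightarrow> 'q::{finite,field} alg_closure) \<Rightarrow> _) monoid))"
  shows "(\<lambda>d\<in>{1::nat..}. restrict (\<lambda>x. F (period x) x) (Xset d)) = F"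
proof -
  have "restrict (\<lambda>x. F (period x) x) (Xset d) = F d" if "d \<ge> 1" for d
    using F that by (auto simp: PiE_iff G_group_simps Bij_def extensional_def Xset_iff_period)
  moreover have "F d = undefined" if "\<not> d \<ge> 1" for d
    using F that by (auto simp: PiE_iff extensional_def)
  ultimately show ?thesis
    by (auto simp: fun_eq_iff)
qed

theorem M_group_iso_product_G_group:
  "(\<lambda>\<pi>. \<lambda>d\<in>{1::nat..}. restrict \<pi> (Xset d))
     \<in> iso (M_group :: (('n::finite \<Rightarrow> 'q::{finite,field} alg_closure) \<Rightarrow> _) monoid) (product_group {1..} G_group)"
proof -
  let ?\<Psi> = "\<lambda>\<pi>::('n \<Rightarrow> 'q alg_closure) \<Rightarrow> ('n \<Rightarrow> 'q alg_closure). \<lambda>d\<in>{1::nat..}. restrict \<pi> (Xset d)"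
  have mem: "?\<Psi> \<pi> \<in> carrier (product_group {1..} G_group)" if "\<pi> \<in> carrier M_group" for \<pi>
    using restrict_M_group_mem_G_group[OF that] by simp
  have "?\<Psi> \<in> hom M_group (product_group {1..} G_group)"
  proof (rule homI)
    fix \<pi>1 \<pi>2 :: "('n \<Rightarrow> 'q alg_closure) \<Rightarrow> ('n \<Rightarrow> 'q alg_closure)"
    assume \<pi>: "\<pi>1 \<in> carrier M_group" "\<pi>2 \<in> carrier M_group"
    have "restrict (\<pi>2 \<circ> \<pi>1) (Xset d) = compose (Xset d) (restrict \<pi>2 (Xset d)) (restrict \<pi>1 (Xset d))" for d
      using period_M_group[OF \<pi>(1)] by (auto simp: compose_def Xset_iff_period)
    thus "?\<Psi> (\<pi>1 \<otimes>\<^bsub>M_group\<^esub> \<pi>2) = ?\<Psi> \<pi>1 \<otimes>\<^bsub>product_group {1..} G_group\<^esub> ?\<Psi> \<pi>2"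
      by (simp add: M_group_def G_group_simps fun_eq_iff)
  qed (rule mem)
  moreover have "inj_on ?\<Psi> (carrier M_group)"
  proof (rule inj_onI)
    fix \<pi> \<pi>' :: "('n \<Rightarrow> 'q alg_closure) \<Rightarrow> ('n \<Rightarrow> 'q alg_closure)"
    assume e: "?\<Psi> \<pi> = ?\<Psi> \<pi>'"
    have r: "restrict \<pi> (Xset (period x)) = restrict \<pi>' (Xset (period x))" for x
      using fun_cong[OF e, of "period x"] period_pos[of x] by simp
    have "\<pi> x = \<pi>' x" for x
      using fun_cong[OF r[of x], of x] by (simp add: Xset_iff_period)
    thus "\<pi> = \<pi>'" ..
  qed
  moreover have "carrier (product_group {1..} G_group) \<subseteq> ?\<Psi> ` carrier M_group"
  proof
    fix F assume F: "F \<in> carrier (product_group {1..} (G_group :: nat \<Rightarrow> (('n \<Rightarrow> 'q alg_closure) \<Rightarrow> _) monoid))"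
    show "F \<in> ?\<Psi> ` carrier M_group"
      using glue_mem_M_group[OF F] restrict_glue[OF F]
      by (intro image_eqI[of F ?\<Psi> "\<lambda>x. F (period x) x"]) simp_all
  qed
  moreover have "?\<Psi> ` carrier M_group \<subseteq> carrier (product_group {1..} G_group)"
    using mem by blast
  ultimately show ?thesis
    unfolding iso_def bij_betw_def by blast
qed

lemma funpow_frob_comp: "((\<lambda>x. frob 1 \<circ> x) ^^ a) x = frob a \<circ> (x :: 'n \<Rightarrow> 'q::{finite,field} alg_closure)"
  by (induction a) (simp_all add: comp_def frob_frob)

lemma G_group_eq_centraliser:
  assumes "0 < d"
  shows "G_group d = centraliser (\<lambda>x. frob 1 \<circ> x) (Xset d :: ('n::finite \<Rightarrow> 'q::{finite,field} alg_closure) set)"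
proof -
  let ?g = "\<lambda>x :: 'n \<Rightarrow> 'q alg_closure. frob 1 \<circ> x"
  have g_mem: "?g x \<in> Xset d" if "x \<in> Xset d" for x
    using that by (simp add: Xset_iff_period period_frob_comp)
  have "\<pi> (\<sigma> \<circ> x) = \<sigma> \<circ> \<pi> x"
    if \<pi>: "\<pi> \<in> carrier (centraliser ?g (Xset d))" and \<sigma>: "\<sigma> \<in> Gal" and x: "x \<in> Xset d" for \<pi> \<sigma> x
  proof -
    \<comment> \<open>a single power of the Frobenius represents \<sigma> on both x and \<pi> x, as both have period d\<close>
    obtain k where k: "\<And>z :: 'n \<Rightarrow> 'q alg_closure. frob d \<circ> z = z \<Longrightarrow> \<sigma> \<circ> z = frob k \<circ> z"
      using Gal_comp_eq_frob_comp_on_fixed[OF \<sigma> assms] by blast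
    have fixed: "frob d \<circ> z = z" if "z \<in> Xset d" for z :: "'n \<Rightarrow> 'q alg_closure"
      using that frob_period[of z] by (simp add: Xset_iff_period)
    have "\<pi> x \<in> Xset d"
      using \<pi> x by (auto simp: centraliser_def Bij_def bij_betw_def)
    hence "\<sigma> \<circ> \<pi> x = frob k \<circ> \<pi> x"
      using k fixed by simp
    also have "\<dots> = (?g ^^ k) (\<pi> x)"
      by (simp only: funpow_frob_comp)
    also have "\<dots> = \<pi> ((?g ^^ k) x)"
      using centraliser_funpow[OF \<pi> x g_mem] by simp
    also have "(?g ^^ k) x = frob k \<circ> x"
      by (simp only: funpow_frob_comp)
    also have "\<dots> = \<sigma> \<circ> x"
      using k fixed x by simp
    finally show ?thesis ..
  qed
  hence "carrier (centraliser ?g (Xset d)) \<subseteq> carrier (G_group d)"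
    by (auto simp: G_group_simps centraliser_def)
  moreover have "carrier (G_group d) \<subseteq> carrier (centraliser ?g (Xset d))"
    using frob_in_Gal[of 1] unfolding G_group_simps centraliser_def by auto
  ultimately have "carrier (G_group d) = carrier (centraliser ?g (Xset d))"
    by (rule antisym[rotated])
  thus ?thesis
    by (simp add: G_group_def centraliser_def)
qed

lemma Xset_cyclic_orbits:
  assumes d: "0 < d"
  shows "\<exists>rep. cyclic_orbits (\<lambda>x. frob 1 \<circ> x) (Xset d :: ('n::finite \<Rightarrow> 'q::{finite,field} alg_closure) set)
                d (card (Xset d :: ('n \<Rightarrow> 'q alg_closure) set) div d) rep"
proof -
  let ?X = "Xset d :: ('n \<Rightarrow> 'q alg_closure) set"
  define Orb where "Orb = gal_orbit ` ?X"
  have finX: "finite ?X"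
    by (rule finite_Xset)
  have orbit_subset: "gal_orbit x \<subseteq> ?X" if "x \<in> ?X" for x
    using that by (auto simp: gal_orbit_eq_range Xset_iff_period period_frob_comp)
  have "card ?X = d * card Orb"
  proof -
    have "\<Union>Orb = ?X"
      unfolding Orb_def using orbit_subset gal_orbit_self by blast
    moreover have "card c = d" if "c \<in> Orb" for c
      using that card_gal_orbit unfolding Orb_def by (auto simp: Xset_iff_period)
    moreover have "c1 \<inter> c2 = {}" if c: "c1 \<in> Orb" "c2 \<in> Orb" "c1 \<noteq> c2" for c1 c2
    proof (rule ccontr)
      assume "c1 \<inter> c2 \<noteq> {}"
      then obtain z where "z \<in> c1" "z \<in> c2"
        by blast
      moreover obtain x1 x2 where "c1 = gal_orbit x1" "c2 = gal_orbit x2"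
        using c(1,2) unfolding Orb_def by blast
      ultimately have "c1 = gal_orbit z" "c2 = gal_orbit z"
        using gal_orbit_eqI[of z x1] gal_orbit_eqI[of z x2] by simp_all
      thus False
        using c(3) by simp
    qed
    ultimately show ?thesis
      using card_partition[of Orb d] finX by (simp add: Orb_def)
  qed
  hence r: "card ?X div d = card Orb"
    using d by simp
  have "finite Orb"
    unfolding Orb_def using finX by simp
  then obtain b where b: "bij_betw b {1..card Orb} Orb"
    using ex_bij_betw_nat_finite_1 by blast
  define rep where "rep i = (SOME x. x \<in> b i)" for i
  have rep: "rep i \<in> ?X" "b i = gal_orbit (rep i)" if "i \<in> {1..card Orb}" for i
  proof -
    have "b i \<in> gal_orbit ` ?X"
      using bij_betwE[OF b] that unfolding Orb_def by blast
    then obtain x where x: "b i = gal_orbit x" "x \<in> ?X"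
      by (rule imageE)
    have ri: "rep i \<in> gal_orbit x"
      unfolding rep_def x(1) using gal_orbit_self[of x] by (rule someI[where P = "\<lambda>y. y \<in> gal_orbit x"])
    show "rep i \<in> ?X"
      using orbit_subset[OF x(2)] ri by blast
    show "b i = gal_orbit (rep i)"
      using x(1) gal_orbit_eqI[OF ri] by simp
  qed
  have "cyclic_orbits (\<lambda>x. frob 1 \<circ> x) ?X d (card Orb) rep"
  proof
    show "0 < d" by (rule d)
    show "((\<lambda>x. frob 1 \<circ> x) ^^ a) (rep i) \<in> ?X" if "i \<in> {1..card Orb}" for i a
      using rep(1)[OF that] by (simp only: funpow_frob_comp) (simp add: Xset_iff_period period_frob_comp)
    show "((\<lambda>x. frob 1 \<circ> x) ^^ a) (rep i) = ((\<lambda>x. frob 1 \<circ> x) ^^ b') (rep j)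
            \<longleftrightarrow> i = j \<and> a mod d = b' mod d"
      if i: "i \<in> {1..card Orb}" and j: "j \<in> {1..card Orb}" for i j a b'
    proof
      assume "((\<lambda>x. frob 1 \<circ> x) ^^ a) (rep i) = ((\<lambda>x. frob 1 \<circ> x) ^^ b') (rep j)"
      hence e: "frob a \<circ> rep i = frob b' \<circ> rep j"
        by (simp only: funpow_frob_comp)
      have "gal_orbit (rep i) = gal_orbit (frob a \<circ> rep i)"
        by (rule gal_orbit_eqI[OF frob_comp_mem_gal_orbit, symmetric])
      also have "\<dots> = gal_orbit (rep j)"
        unfolding e by (rule gal_orbit_eqI[OF frob_comp_mem_gal_orbit])
      finally have "gal_orbit (rep i) = gal_orbit (rep j)" .
      hence "i = j"
        using rep(2)[OF i] rep(2)[OF j] inj_onD[OF bij_betw_imp_inj_on[OF b] _ i j] by simp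
      moreover have "period (rep i) = d"
        using rep(1)[OF i] by (simp add: Xset_iff_period)
      ultimately show "i = j \<and> a mod d = b' mod d"
        using e by (simp add: frob_comp_eq_iff)
    next
      assume "i = j \<and> a mod d = b' mod d"
      moreover have "period (rep i) = d"
        using rep(1)[OF i] by (simp add: Xset_iff_period)
      ultimately show "((\<lambda>x. frob 1 \<circ> x) ^^ a) (rep i) = ((\<lambda>x. frob 1 \<circ> x) ^^ b') (rep j)"
        by (simp only: funpow_frob_comp frob_comp_eq_iff)
    qed
    show "\<exists>i\<in>{1..card Orb}. \<exists>a. x = ((\<lambda>x. frob 1 \<circ> x) ^^ a) (rep i)" if x: "x \<in> ?X" for x
    proof -
      obtain i where i: "i \<in> {1..card Orb}" "gal_orbit x = b i"
        using b x unfolding Orb_def bij_betw_def by blast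
      hence "x \<in> gal_orbit (rep i)"
        using rep(2)[OF i(1)] gal_orbit_self[of x] by simp
      then obtain a where "x = frob a \<circ> rep i"
        unfolding gal_orbit_eq_range by blast
      thus ?thesis
        using i(1) by (auto simp only: funpow_frob_comp)
    qed
  qed
  thus ?thesis
    unfolding r by blast
qed

lemma G_group_iso_wreath_cyc:
  fixes T :: "('n::finite \<Rightarrow> 'q::{finite,field} alg_closure) itself"
  assumes "0 < d"
  shows "(G_group d :: (('n \<Rightarrow> 'q alg_closure) \<Rightarrow> _) monoid) \<cong> wreath_cyc d (r_num T d)"
proof -
  obtain rep :: "nat \<Rightarrow> 'n \<Rightarrow> 'q alg_closure"
    where "cyclic_orbits (\<lambda>x. frob 1 \<circ> x) (Xset d) d (r_num T d) rep"
    using Xset_cyclic_orbits[OF assms] unfolding r_num_def by blast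
  thus ?thesis
    unfolding G_group_eq_centraliser[OF assms] by (rule cyclic_orbits.centraliser_iso_wreath_cyc)
qed

theorem mainTheorem9:
  fixes T :: "('n::finite \<Rightarrow> 'q::{finite,field} alg_closure) itself"
  shows "(\<lambda>\<pi>. \<lambda>d\<in>{1::nat..}. restrict \<pi> (Xset d))
            \<in> iso (M_group :: (('n \<Rightarrow> 'q alg_closure) \<Rightarrow> _) monoid) (product_group {1..} G_group)
       \<and> (\<forall>d::nat. d \<ge> 1 \<longrightarrow>
            (G_group d :: (('n \<Rightarrow> 'q alg_closure) \<Rightarrow> _) monoid) \<cong> wreath_cyc d (r_num T d))
       \<and> (\<forall>d::nat. d \<ge> 1 \<longrightarrow>
            coord_perm_action d (r_num T d)
              \<in> hom (RPerm {1..r_num T d}) (AutoGroup (cyc_power d (r_num T d)))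
          \<and> (G_group d :: (('n \<Rightarrow> 'q alg_closure) \<Rightarrow> _) monoid)
              \<cong> semidirect_product (cyc_power d (r_num T d)) (RPerm {1..r_num T d})
                   (coord_perm_action d (r_num T d)))"
proof (intro conjI allI impI)
  show "(\<lambda>\<pi>. \<lambda>d\<in>{1::nat..}. restrict \<pi> (Xset d))
          \<in> iso (M_group :: (('n \<Rightarrow> 'q alg_closure) \<Rightarrow> _) monoid) (product_group {1..} G_group)"
    by (rule M_group_iso_product_G_group)
  fix d :: nat assume "d \<ge> 1"
  hence wreath: "(G_group d :: (('n \<Rightarrow> 'q alg_closure) \<Rightarrow> _) monoid) \<cong> wreath_cyc d (r_num T d)"
    by (intro G_group_iso_wreath_cyc) simp
  thus "(G_group d :: (('n \<Rightarrow> 'q alg_closure) \<Rightarrow> _) monoid) \<cong> wreath_cyc d (r_num T d)" .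
  show "coord_perm_action d (r_num T d) \<in> hom (RPerm {1..r_num T d}) (AutoGroup (cyc_power d (r_num T d)))"
    by (rule coord_perm_action_hom)
  show "(G_group d :: (('n \<Rightarrow> 'q alg_closure) \<Rightarrow> _) monoid)
          \<cong> semidirect_product (cyc_power d (r_num T d)) (RPerm {1..r_num T d}) (coord_perm_action d (r_num T d))"
    using wreath by (simp only: wreath_cyc_def)
qed

end
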